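(* Let $d=1$. There is a constant $c_1$ depending only on the dimension such that for all $N\ge1$, $$E_Q\left((K(N)-N)^2\right)\le N^2\sum_{n=1}^N\left(c_1c^2_{N,1}N^{1/2}\right)^n.$$
   Context: $P^N_0$ is the uniform probability measure on nearest-neighbour walks $\omega:\{0,\dots,N\}\to\mathbb{Z}$ with $\omega(0)=0$, $|\omega(n)-\omega(n-1)|=1$. The environment $h=\{h(n,x):n\in\mathbb{N},x\in\mathbb{Z}\}$ is i.i.d. with $h(n,x)=\pm1$ each with probability $1/2$ on $(H,\mathcal{G},Q)$, independent of the walk; $E_Q$ is expectation under $Q$. $(c_{N,1})$ is a sequence of positive numbers with $\lim_{N\to\infty}c_{N,1}^2N^{1/2}=0$. $K(N)=\int\prod_{n=1}^N[1+c_{N,1}h(n,\omega(n))]\,\omega(N)^2\,dP^N_0(\omega)$. *)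

theory Defs
  imports "HOL-Probability.Probability"
begin

text \<open>Nearest-neighbour walks on Z of length N started at 0, as functions
  on nat that are meaningful on {0..N} and set to 0 beyond N.\<close>
definition walks :: "nat \<Rightarrow> (nat \<Rightarrow> int) set" where
  "walks N = {w. w 0 = 0 \<and> (\<forall>n\<in>{1..N}. \<bar>w n - w (n - 1)\<bar> = 1) \<and> (\<forall>n>N. w n = 0)}"

definition PN :: "nat \<Rightarrow> (nat \<Rightarrow> int) pmf" where
  "PN N = pmf_of_set (walks N)"

definition Qenv :: "(nat \<times> int \<Rightarrow> real) measure" where
  "Qenv = PiM UNIV (\<lambda>_. measure_pmf (pmf_of_set {-1, 1::real}))"

text \<open>K(N) for the environment h and the sequence c (c N = c_{N,1}).\<close>
definition K :: "(nat \<Rightarrow> real) \<Rightarrow> nat \<Rightarrow> (nat \<times> int \<Rightarrow> real) \<Rightarrow> real" where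
  "K c N h = (\<integral>w. (\<Prod>n\<in>{1..N}. 1 + c N * h (n, w n)) * (real_of_int (w N))^2 \<partial>(measure_pmf (PN N)))"

end

theory Submission
  imports Defs
begin

(* Write A_w(h) for the product of 1 + c h(n, w n) along a walk w, so that K(N) - N is the
   average over w of w(N)^2 (A_w - 1). Under Q the factors of A_w A_v are independent
   Rademacher moments except where the two walks meet, hence E_Q[(A_w - 1)(A_v - 1)] =
   (1 + c^2)^(number of meetings) - 1. Bounding the resulting quadratic form by its diagonal
   (2 a b <= a^2 + b^2) leaves the fourth moment 3N^2 - 2N of w(N) times the generating function
   of the number of meetings of a walk with a fixed path. Decomposing at the first meeting and
   using P(w t = x) <= 1/sqrt t (central binomial bound) gives E[(1+e)^meetings] - 1 <=
   sum_k (e sum_t 1/sqrt t)^k <= sum_k (2 e sqrt N)^k. *)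

section \<open>Simple random walk\<close>

lemma walks_0: "walks 0 = {\<lambda>_. 0}"
  unfolding walks_def by (auto intro!: ext) (metis gr0I)

lemma walks_Suc: "walks (Suc N) = (\<lambda>(w, s). w(Suc N := w N + s)) ` (walks N \<times> {-1, 1})"
proof
  show "walks (Suc N) \<subseteq> (\<lambda>(w, s). w(Suc N := w N + s)) ` (walks N \<times> {-1, 1})"
  proof
    fix v assume v: "v \<in> walks (Suc N)"
    have "\<bar>v (Suc N) - v N\<bar> = 1" using v unfolding walks_def by (auto dest: bspec[of _ _ "Suc N"])
    then have "v (Suc N) - v N \<in> {-1, 1}" by auto
    moreover have "v(Suc N := 0) \<in> walks N" using v unfolding walks_def by auto
    moreover have "v = (v(Suc N := 0))(Suc N := v N + (v (Suc N) - v N))" by auto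
    ultimately show "v \<in> (\<lambda>(w, s). w(Suc N := w N + s)) ` (walks N \<times> {-1, 1})"
      by (intro image_eqI[where x = "(v(Suc N := 0), v (Suc N) - v N)"]) auto
  qed
  show "(\<lambda>(w, s). w(Suc N := w N + s)) ` (walks N \<times> {-1, 1}) \<subseteq> walks (Suc N)"
    unfolding walks_def by (auto simp: le_Suc_eq)
qed

lemma inj_on_walk_extend: "inj_on (\<lambda>(w, s). w(Suc N := w N + s)) (walks N \<times> {-1, 1})"
proof (rule inj_onI, clarify)
  fix w w' and s s' :: int
  assume "w \<in> walks N" "w' \<in> walks N" and eq: "w(Suc N := w N + s) = w'(Suc N := w' N + s')"
  then have "w (Suc N) = w' (Suc N)" unfolding walks_def by auto
  then have "w = w'" using eq by (metis fun_upd_triv fun_upd_upd)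
  moreover from this have "s = s'" using fun_cong[OF eq, of "Suc N"] by simp
  ultimately show "w = w' \<and> s = s'" ..
qed

lemma finite_walks: "finite (walks N)"
  by (induction N) (auto simp: walks_0 walks_Suc)

lemma sum_walks_Suc:
  "(\<Sum>w\<in>walks (Suc N). F w) = (\<Sum>w\<in>walks N. F (w(Suc N := w N + 1)) + F (w(Suc N := w N - 1)))"
proof -
  have "(\<Sum>w\<in>walks (Suc N). F w) = (\<Sum>(w, s)\<in>walks N \<times> {-1, 1}. F (w(Suc N := w N + s)))"
    unfolding walks_Suc by (subst sum.reindex[OF inj_on_walk_extend]) (simp add: case_prod_beta)
  also have "\<dots> = (\<Sum>w\<in>walks N. \<Sum>s\<in>{-1, 1::int}. F (w(Suc N := w N + s)))"
    by (subst sum.cartesian_product) simp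
  finally show ?thesis by (simp add: add.commute)
qed

lemma card_walks: "card (walks N) = 2 ^ N"
proof (induction N)
  case (Suc N)
  have "card (walks (Suc N)) = (\<Sum>w\<in>walks (Suc N). 1)" by simp
  also have "\<dots> = 2 * card (walks N)" by (subst sum_walks_Suc) simp
  finally show ?case using Suc by simp
qed (simp add: walks_0)

definition walk_concat :: "nat \<Rightarrow> nat \<Rightarrow> (nat \<Rightarrow> int) \<Rightarrow> (nat \<Rightarrow> int) \<Rightarrow> nat \<Rightarrow> int" where
  "walk_concat t m u v n = (if n \<le> t then u n else if n \<le> t + m then u t + v (n - t) else 0)"

lemma walk_concat_0: "u \<in> walks t \<Longrightarrow> walk_concat t 0 u v = u"
  unfolding walk_concat_def walks_def by (auto intro!: ext)

lemma walk_concat_extend: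
  assumes "v \<in> walks m"
  shows "(walk_concat t m u v)(Suc (t + m) := walk_concat t m u v (t + m) + s)
         = walk_concat t (Suc m) u (v(Suc m := v m + s))"
proof
  fix n
  have "v 0 = 0" using assms unfolding walks_def by simp
  then show "((walk_concat t m u v)(Suc (t + m) := walk_concat t m u v (t + m) + s)) n
             = walk_concat t (Suc m) u (v(Suc m := v m + s)) n"
    unfolding walk_concat_def by (auto simp: Suc_diff_le)
qed

lemma sum_walks_add:
  "(\<Sum>w\<in>walks (t + m). F w) = (\<Sum>u\<in>walks t. \<Sum>v\<in>walks m. F (walk_concat t m u v))"
proof (induction m arbitrary: F)
  case 0
  then show ?case by (simp add: walks_0 walk_concat_0)
next
  case (Suc m)
  have "(\<Sum>w\<in>walks (t + Suc m). F w)
      = (\<Sum>w\<in>walks (t + m). F (w(Suc (t + m) := w (t + m) + 1)) + F (w(Suc (t + m) := w (t + m) - 1)))"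
    by (simp add: sum_walks_Suc)
  also have "\<dots> = (\<Sum>u\<in>walks t. \<Sum>v\<in>walks m.
      F (walk_concat t (Suc m) u (v(Suc m := v m + 1))) + F (walk_concat t (Suc m) u (v(Suc m := v m - 1))))"
    unfolding Suc.IH
    by (intro sum.cong refl) (use walk_concat_extend[of _ m t _ 1] walk_concat_extend[of _ m t _ "-1"] in simp)
  also have "\<dots> = (\<Sum>u\<in>walks t. \<Sum>v\<in>walks (Suc m). F (walk_concat t (Suc m) u v))"
    by (simp add: sum_walks_Suc)
  finally show ?case .
qed

definition walk_avg :: "nat \<Rightarrow> ((nat \<Rightarrow> int) \<Rightarrow> real) \<Rightarrow> real" where
  "walk_avg N F = (\<Sum>w\<in>walks N. F w) / 2 ^ N"

lemma integral_PN_eq_walk_avg: "(\<integral>w. F w \<partial>measure_pmf (PN N)) = walk_avg N F"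
proof -
  have "walks N \<noteq> {}" using card_walks[of N] by auto
  then show ?thesis
    unfolding PN_def walk_avg_def by (simp add: integral_pmf_of_set finite_walks card_walks)
qed

lemma walk_avg_add_length:
  "walk_avg (t + m) F = walk_avg t (\<lambda>u. walk_avg m (\<lambda>v. F (walk_concat t m u v)))"
  unfolding walk_avg_def sum_walks_add by (simp add: sum_divide_distrib power_add mult.commute)

lemma walk_avg_Suc:
  "walk_avg (Suc N) F = walk_avg N (\<lambda>w. (F (w(Suc N := w N + 1)) + F (w(Suc N := w N - 1))) / 2)"
  unfolding walk_avg_def sum_walks_Suc by (simp add: sum_divide_distrib)

lemma walk_avg_const [simp]: "walk_avg N (\<lambda>_. a) = a"
  unfolding walk_avg_def by (simp add: card_walks)

lemma walk_avg_add: "walk_avg N (\<lambda>w. f w + g w) = walk_avg N f + walk_avg N g"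
  unfolding walk_avg_def by (simp add: sum.distrib add_divide_distrib)

lemma walk_avg_cmult: "walk_avg N (\<lambda>w. a * f w) = a * walk_avg N f"
  unfolding walk_avg_def by (simp add: sum_distrib_left)

lemma walk_avg_multc: "walk_avg N (\<lambda>w. f w * a) = walk_avg N f * a"
  unfolding walk_avg_def by (simp add: sum_distrib_right)

lemma walk_avg_sum: "walk_avg N (\<lambda>w. \<Sum>t\<in>T. f t w) = (\<Sum>t\<in>T. walk_avg N (f t))"
  unfolding walk_avg_def by (simp add: sum_divide_distrib[symmetric] sum.swap[of _ T])

lemma walk_avg_mono: "(\<And>w. w \<in> walks N \<Longrightarrow> f w \<le> g w) \<Longrightarrow> walk_avg N f \<le> walk_avg N g"
  unfolding walk_avg_def by (intro divide_right_mono sum_mono) auto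

lemma walk_avg_cong: "(\<And>w. w \<in> walks N \<Longrightarrow> f w = g w) \<Longrightarrow> walk_avg N f = walk_avg N g"
  unfolding walk_avg_def by (simp cong: sum.cong)

lemma walk_second_moment: "walk_avg N (\<lambda>w. real_of_int (w N) ^ 2) = real N"
proof (induction N)
  case (Suc N)
  have "walk_avg (Suc N) (\<lambda>w. real_of_int (w (Suc N)) ^ 2) = walk_avg N (\<lambda>w. real_of_int (w N) ^ 2 + 1)"
    unfolding walk_avg_Suc by (rule walk_avg_cong) (simp add: power2_eq_square algebra_simps)
  then show ?case using Suc by (simp add: walk_avg_add)
qed (simp add: walk_avg_def walks_0)

lemma walk_fourth_moment: "walk_avg N (\<lambda>w. real_of_int (w N) ^ 4) = 3 * real N ^ 2 - 2 * real N"
proof (induction N)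
  case (Suc N)
  have "walk_avg (Suc N) (\<lambda>w. real_of_int (w (Suc N)) ^ 4)
      = walk_avg N (\<lambda>w. real_of_int (w N) ^ 4 + 6 * real_of_int (w N) ^ 2 + 1)"
    unfolding walk_avg_Suc by (rule walk_avg_cong) (simp add: power2_eq_square power4_eq_xxxx algebra_simps)
  also have "\<dots> = walk_avg N (\<lambda>w. real_of_int (w N) ^ 4) + 6 * walk_avg N (\<lambda>w. real_of_int (w N) ^ 2) + 1"
    by (simp add: walk_avg_add walk_avg_cmult)
  finally show ?case
    unfolding Suc walk_second_moment by (simp add: power2_eq_square algebra_simps)
qed (simp add: walk_avg_def walks_0)

section \<open>Hitting probabilities\<close>

definition hit_prob :: "nat \<Rightarrow> int \<Rightarrow> real" where
  "hit_prob t x = walk_avg t (\<lambda>u. of_bool (u t = x))"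

lemma hit_prob_nonneg: "0 \<le> hit_prob t x"
  unfolding hit_prob_def walk_avg_def by (simp add: sum_nonneg)

lemma hit_prob_0: "hit_prob 0 x = of_bool (x = 0)"
  unfolding hit_prob_def walk_avg_def by (simp add: walks_0)

lemma hit_prob_Suc: "hit_prob (Suc t) x = (hit_prob t (x - 1) + hit_prob t (x + 1)) / 2"
proof -
  have "hit_prob (Suc t) x = walk_avg t (\<lambda>u. (of_bool (u t = x - 1) + of_bool (u t = x + 1)) / 2)"
    unfolding hit_prob_def walk_avg_Suc by (rule walk_avg_cong) auto
  then show ?thesis
    unfolding hit_prob_def walk_avg_def by (simp add: sum.distrib add_divide_distrib flip: sum_divide_distrib)
qed

lemma hit_prob_odd: "odd (x + int t) \<Longrightarrow> hit_prob t x = 0"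
proof (induction t arbitrary: x)
  case 0
  then show ?case by (auto simp: hit_prob_0)
next
  case (Suc t)
  then have "odd (x - 1 + int t)" "odd (x + 1 + int t)" by simp_all
  then show ?case by (simp add: hit_prob_Suc Suc.IH)
qed

lemma hit_prob_below: "x < - int t \<Longrightarrow> hit_prob t x = 0"
proof (induction t arbitrary: x)
  case (Suc t)
  then show ?case by (simp add: hit_prob_Suc)
qed (simp add: hit_prob_0)

lemma hit_prob_binomial: "hit_prob t (2 * int k - int t) = real (t choose k) / 2 ^ t"
proof (induction t arbitrary: k)
  case 0
  then show ?case by (simp add: hit_prob_0)
next
  case (Suc t)
  note IH = Suc.IH
  show ?case
  proof (cases k)
    case 0
    have "hit_prob t (- 2 - int t) = 0" by (rule hit_prob_below) simp
    then show ?thesis using IH[of 0] by (simp add: hit_prob_Suc 0 diff_add_eq)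
  next
    case (Suc j)
    have "2 * int k - int (Suc t) - 1 = 2 * int j - int t" "2 * int k - int (Suc t) + 1 = 2 * int k - int t"
      using Suc by simp_all
    then have "hit_prob (Suc t) (2 * int k - int (Suc t))
        = (hit_prob t (2 * int j - int t) + hit_prob t (2 * int k - int t)) / 2"
      by (simp only: hit_prob_Suc)
    then show ?thesis unfolding IH by (simp add: Suc add_divide_distrib)
  qed
qed

lemma hit_prob_le_central_binomial: "hit_prob t x \<le> real (t choose (t div 2)) / 2 ^ t"
proof (cases "odd (x + int t) \<or> x < - int t")
  case True
  then show ?thesis using hit_prob_odd hit_prob_below by auto
next
  case False
  then have "x = 2 * int (nat ((x + int t) div 2)) - int t" by auto
  then show ?thesis
    by (metis hit_prob_binomial binomial_maximum divide_right_mono of_nat_le_iff zero_le_power zero_le_numeral)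
qed

lemma central_binomial_Suc:
  "real (Suc (Suc (2 * s)) choose Suc s) * (s + 1) = 2 * (2 * s + 1) * real ((2 * s) choose s)"
proof -
  have odd: "Suc (Suc (2 * s)) choose Suc s = 2 * (Suc (2 * s) choose s)"
    using central_binomial_odd[of "Suc (2 * s)"] by (simp add: binomial_Suc_Suc)
  have "(Suc (Suc (2 * s)) choose Suc s) * Suc s = 2 * ((Suc (2 * s) choose s) * Suc s)"
    unfolding odd by simp
  also have "\<dots> = 2 * (Suc (2 * s) * ((2 * s) choose s))"
    using Suc_times_binomial_eq[of "2 * s" s] central_binomial_odd[of "Suc (2 * s)"] by simp
  finally have "real ((Suc (Suc (2 * s)) choose Suc s) * Suc s)
      = real (2 * (Suc (2 * s) * ((2 * s) choose s)))"
    by (simp only:)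
  then show ?thesis by (simp del: binomial_Suc_Suc add: algebra_simps)
qed

lemma central_binomial_sq_le: "real ((2 * s) choose s) ^ 2 * (2 * s + 1) \<le> 16 ^ s"
proof (induction s)
  case (Suc s)
  define C where "C = real ((2 * s) choose s)"
  define D where "D = real ((2 * Suc s) choose Suc s)"
  define r where "r = real s"
  have rec: "D * (r + 1) = 2 * (2 * r + 1) * C"
    unfolding C_def D_def r_def using central_binomial_Suc[of s] by (simp del: binomial_Suc_Suc)
  have IH: "C ^ 2 * (2 * r + 1) \<le> 16 ^ s"
    using Suc by (simp add: C_def r_def add.commute)
  have "(r + 1) ^ 2 * (D ^ 2 * (2 * r + 3))
      = (4 * (2 * r + 1) * (2 * r + 3)) * (C ^ 2 * (2 * r + 1))"
    using arg_cong[OF rec, of "\<lambda>y. y ^ 2 * (2 * r + 3)"] by (simp add: power2_eq_square algebra_simps)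
  also have "\<dots> \<le> (4 * (2 * r + 1) * (2 * r + 3)) * 16 ^ s"
    using IH by (intro mult_left_mono) (simp_all add: r_def)
  also have "\<dots> \<le> (16 * (r + 1) ^ 2) * 16 ^ s"
    by (intro mult_right_mono) (simp_all add: power2_eq_square algebra_simps)
  also have "\<dots> = (r + 1) ^ 2 * 16 ^ Suc s"
    by simp
  finally have "D ^ 2 * (2 * r + 3) \<le> 16 ^ Suc s"
    by (rule mult_left_le_imp_le) (simp add: r_def)
  then show ?case by (simp add: D_def r_def add.commute)
qed simp

lemma central_binomial_sq_mult_le: "real (t choose (t div 2)) ^ 2 * t \<le> 4 ^ t"
proof -
  have "t = 2 * (t div 2) \<or> t = 2 * (t div 2) + 1" by presburger
  then obtain s where "t = 2 * s \<or> t = 2 * s + 1" by blast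
  then show ?thesis
  proof
    assume t: "t = 2 * s"
    have "real (t choose (t div 2)) ^ 2 * t \<le> real ((2 * s) choose s) ^ 2 * (2 * s + 1)"
      using t by (simp add: mult_left_mono)
    also have "\<dots> \<le> 16 ^ s" by (rule central_binomial_sq_le)
    finally show ?thesis using t by (simp add: power_mult)
  next
    assume t: "t = 2 * s + 1"
    define D where "D = (2 * Suc s) choose Suc s"
    have "D = 2 * (t choose (t div 2))"
      unfolding D_def using t central_binomial_odd[of t] by (simp add: binomial_Suc_Suc)
    then have "4 * (real (t choose (t div 2)) ^ 2 * t) \<le> real D ^ 2 * (2 * Suc s + 1)"
      using t by (simp add: power2_eq_square)
    also have "\<dots> \<le> 16 ^ Suc s" unfolding D_def by (rule central_binomial_sq_le)
    also have "\<dots> = 4 * 4 ^ t" using t by (simp add: power_mult)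
    finally show ?thesis by simp
  qed
qed

lemma hit_prob_le_inverse_sqrt:
  assumes "t \<ge> 1"
  shows "hit_prob t x \<le> 1 / sqrt t"
proof -
  have "(2::real) ^ t * 2 ^ t = 4 ^ t" by (simp flip: power_mult_distrib)
  then have "(real (t choose (t div 2)) / 2 ^ t) ^ 2 \<le> 1 / t"
    using central_binomial_sq_mult_le[of t] assms
    by (simp add: power_divide pos_le_divide_eq pos_divide_le_eq power2_eq_square[of "2 ^ t"])
  then have "real (t choose (t div 2)) / 2 ^ t \<le> sqrt (1 / t)"
    by (rule real_le_rsqrt)
  then have "real (t choose (t div 2)) / 2 ^ t \<le> 1 / sqrt t"
    by (simp add: real_sqrt_divide)
  with hit_prob_le_central_binomial show ?thesis by (rule order_trans)
qed

lemma sum_inverse_sqrt_le: "(\<Sum>t\<in>{1..N}. 1 / sqrt (real t)) \<le> 2 * sqrt (real N)"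
proof (induction N)
  case (Suc N)
  define u where "u = sqrt (real N)"
  define v where "v = sqrt (real (Suc N))"
  have v: "v > 0" and uv: "u ^ 2 + 1 = v ^ 2" unfolding u_def v_def by auto
  have "2 * u * v \<le> u ^ 2 + v ^ 2" by (rule sum_squares_bound)
  then have "(2 * u + 1 / v) * v \<le> (2 * v) * v"
    using v uv by (simp add: algebra_simps power2_eq_square)
  then have step: "2 * u + 1 / v \<le> 2 * v"
    using v by (simp only: mult_le_cancel_right)
  have "(\<Sum>t\<in>{1..Suc N}. 1 / sqrt (real t)) = (\<Sum>t\<in>{1..N}. 1 / sqrt (real t)) + 1 / v"
    by (simp add: sum.nat_ivl_Suc' v_def)
  also have "\<dots> \<le> 2 * u + 1 / v" using Suc by (simp add: u_def)
  also have "\<dots> \<le> 2 * v" by (rule step)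
  finally show ?case unfolding v_def .
qed simp

section \<open>Meetings of a walk with a fixed path\<close>

lemma prod_one_plus_expand:
  fixes x :: "nat \<Rightarrow> 'a :: comm_semiring_1"
  shows "(\<Prod>n\<in>{1..N}. 1 + x n) = 1 + (\<Sum>t\<in>{1..N}. x t * (\<Prod>n\<in>{Suc t..N}. 1 + x n))"
proof (induction N)
  case (Suc N)
  have "(\<Prod>n\<in>{1..Suc N}. 1 + x n) = (1 + x (Suc N)) * (\<Prod>n\<in>{1..N}. 1 + x n)"
    by (simp add: prod.nat_ivl_Suc' mult.commute)
  also have "\<dots> = 1 + (x (Suc N) + (\<Sum>t\<in>{1..N}. x t * ((\<Prod>n\<in>{Suc t..N}. 1 + x n) * (1 + x (Suc N)))))"
    unfolding Suc by (simp add: algebra_simps sum_distrib_left sum_distrib_right)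
  also have "\<dots> = 1 + (\<Sum>t\<in>{1..Suc N}. x t * (\<Prod>n\<in>{Suc t..Suc N}. 1 + x n))"
    by (simp add: sum.nat_ivl_Suc' prod.nat_ivl_Suc' add.commute)
  finally show ?case .
qed simp

definition overlap_weight :: "real \<Rightarrow> nat \<Rightarrow> (nat \<Rightarrow> int) \<Rightarrow> (nat \<Rightarrow> int) \<Rightarrow> real" where
  "overlap_weight e N w v = (\<Prod>n\<in>{1..N}. 1 + e * of_bool (w n = v n))"

definition overlap_avg :: "real \<Rightarrow> nat \<Rightarrow> (nat \<Rightarrow> int) \<Rightarrow> real" where
  "overlap_avg e N b = walk_avg N (overlap_weight e N b)"

lemma overlap_weight_commute: "overlap_weight e N w v = overlap_weight e N v w"
  unfolding overlap_weight_def by (intro prod.cong refl) auto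

lemma overlap_weight_ge_1: "e \<ge> 0 \<Longrightarrow> overlap_weight e N w v \<ge> 1"
  unfolding overlap_weight_def by (rule prod_ge_1) simp

(* Markov property at the meeting time t: after t the walk is a fresh walk, which meets
   b at time t + j iff it meets the shifted path j \<mapsto> b (t + j) - b t at time j. *)
lemma overlap_avg_first_meeting:
  assumes "t \<in> {1..N}"
  shows "walk_avg N (\<lambda>w. e * of_bool (b t = w t) * (\<Prod>n\<in>{Suc t..N}. 1 + e * of_bool (b n = w n)))
         = e * hit_prob t (b t) * overlap_avg e (N - t) (\<lambda>j. b (t + j) - b t)"
proof -
  define m where "m = N - t"
  have N: "N = t + m" using assms unfolding m_def by simp
  let ?b = "\<lambda>j. b (t + j) - b t"
  have concat_t: "walk_concat t m u v t = u t" for u v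
    by (simp add: walk_concat_def)
  have concat_tail:
    "(\<Prod>n\<in>{Suc t..t + m}. 1 + e * of_bool (b n = walk_concat t m u v n)) = overlap_weight e m ?b v"
    if "u t = b t" for u v
  proof -
    have "(\<Prod>n\<in>{Suc t..t + m}. 1 + e * of_bool (b n = walk_concat t m u v n))
        = (\<Prod>j\<in>{1..m}. 1 + e * of_bool (b (t + j) = walk_concat t m u v (t + j)))"
      by (rule prod.reindex_bij_witness[where i="\<lambda>j. t + j" and j="\<lambda>n. n - t"]) auto
    also have "\<dots> = overlap_weight e m ?b v"
      unfolding overlap_weight_def using that by (intro prod.cong refl) (auto simp: walk_concat_def)
    finally show ?thesis .
  qed
  have inner: "walk_avg m (\<lambda>v. e * of_bool (b t = walk_concat t m u v t)
        * (\<Prod>n\<in>{Suc t..t + m}. 1 + e * of_bool (b n = walk_concat t m u v n)))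
      = e * of_bool (u t = b t) * overlap_avg e m ?b" for u
    by (cases "u t = b t") (simp_all add: concat_t concat_tail overlap_avg_def walk_avg_cmult)
  have "walk_avg N (\<lambda>w. e * of_bool (b t = w t) * (\<Prod>n\<in>{Suc t..N}. 1 + e * of_bool (b n = w n)))
      = walk_avg t (\<lambda>u. e * of_bool (u t = b t) * overlap_avg e m ?b)"
    unfolding N walk_avg_add_length inner ..
  also have "\<dots> = e * hit_prob t (b t) * overlap_avg e m ?b"
    unfolding hit_prob_def by (simp add: walk_avg_cmult walk_avg_multc)
  finally show ?thesis unfolding m_def .
qed

lemma overlap_avg_renewal:
  "overlap_avg e m b
    = 1 + (\<Sum>t\<in>{1..m}. e * hit_prob t (b t) * overlap_avg e (m - t) (\<lambda>j. b (t + j) - b t))"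
proof -
  let ?tail = "\<lambda>t v. e * of_bool (b t = v t) * (\<Prod>n\<in>{Suc t..m}. 1 + e * of_bool (b n = v n))"
  have "overlap_avg e m b = walk_avg m (\<lambda>v. 1 + (\<Sum>t\<in>{1..m}. ?tail t v))"
    unfolding overlap_avg_def overlap_weight_def by (rule walk_avg_cong) (rule prod_one_plus_expand)
  also have "\<dots> = 1 + (\<Sum>t\<in>{1..m}. walk_avg m (?tail t))"
    by (simp only: walk_avg_add walk_avg_sum walk_avg_const)
  finally show ?thesis by (simp add: overlap_avg_first_meeting)
qed

lemma overlap_avg_le:
  assumes e: "e \<ge> 0" and q: "\<And>t. q t \<ge> 0" and hit: "\<And>t x. t \<ge> 1 \<Longrightarrow> hit_prob t x \<le> q t"
  shows "overlap_avg e m b \<le> (\<Sum>k\<le>m. (e * (\<Sum>t\<in>{1..m}. q t)) ^ k)"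
proof (induction m arbitrary: b rule: less_induct)
  case (less m)
  define r where "r = e * (\<Sum>t\<in>{1..m}. q t)"
  have r: "r \<ge> 0" unfolding r_def using e q by (simp add: sum_nonneg)
  define B where "B = (\<Sum>k<m. r ^ k)"
  have B: "B \<ge> 0" unfolding B_def using r by (simp add: sum_nonneg)
  have rest: "overlap_avg e (m - t) b' \<le> B" if t: "t \<in> {1..m}" for t b'
  proof -
    have "e * (\<Sum>t\<in>{1..m - t}. q t) \<le> r"
      unfolding r_def using e q by (intro mult_left_mono sum_mono2) auto
    then have "(\<Sum>k\<le>m - t. (e * (\<Sum>t\<in>{1..m - t}. q t)) ^ k) \<le> (\<Sum>k\<le>m - t. r ^ k)"
      using e q by (intro sum_mono power_mono) (auto simp: sum_nonneg)
    also have "\<dots> \<le> B"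
      unfolding B_def using t r by (intro sum_mono2) auto
    finally show ?thesis using less.IH[of "m - t" b'] t by simp
  qed
  have "overlap_avg e m b \<le> 1 + (\<Sum>t\<in>{1..m}. e * q t * B)"
    unfolding overlap_avg_renewal[of e m b]
  proof (intro add_left_mono sum_mono)
    fix t assume t: "t \<in> {1..m}"
    have "e * hit_prob t (b t) * overlap_avg e (m - t) (\<lambda>j. b (t + j) - b t) \<le> e * hit_prob t (b t) * B"
      using rest[OF t] e hit_prob_nonneg by (intro mult_left_mono) auto
    also have "\<dots> \<le> e * q t * B"
      using hit[of t] t e B by (intro mult_right_mono mult_left_mono) auto
    finally show "e * hit_prob t (b t) * overlap_avg e (m - t) (\<lambda>j. b (t + j) - b t) \<le> e * q t * B" .
  qed
  also have "\<dots> = 1 + r * B"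
    unfolding r_def by (simp add: sum_distrib_left sum_distrib_right mult_ac)
  also have "\<dots> = (\<Sum>k<Suc m. r ^ k)"
    unfolding B_def sum.lessThan_Suc_shift by (simp add: sum_distrib_left)
  finally show ?case unfolding r_def lessThan_Suc_atMost .
qed

section \<open>Independence of the environment\<close>

abbreviation rademacher :: "real measure" where
  "rademacher \<equiv> measure_pmf (pmf_of_set {-1, 1})"

lemma integral_Qenv_prod:
  fixes f :: "nat \<times> int \<Rightarrow> real \<Rightarrow> real"
  assumes J: "finite J"
  shows "integrable Qenv (\<lambda>h. \<Prod>j\<in>J. f j (h j))"
    and "(\<integral>h. (\<Prod>j\<in>J. f j (h j)) \<partial>Qenv) = (\<Prod>j\<in>J. \<integral>y. f j y \<partial>rademacher)"
proof -
  interpret P: product_prob_space "\<lambda>_::nat \<times> int. rademacher" UNIV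
    by unfold_locales (simp add: prob_space_measure_pmf)
  let ?g = "\<lambda>x::nat \<times> int \<Rightarrow> real. \<Prod>j\<in>J. f j (x j)"
  have distr: "distr Qenv (PiM J (\<lambda>_. rademacher)) (\<lambda>x. restrict x J) = PiM J (\<lambda>_. rademacher)"
    unfolding Qenv_def by (rule P.distr_PiM_restrict_finite[OF J]) simp
  have restrict: "(\<lambda>x. restrict x J) \<in> measurable Qenv (PiM J (\<lambda>_. rademacher))"
    unfolding Qenv_def by (rule measurable_restrict_subset) simp
  have g: "?g \<in> borel_measurable (PiM J (\<lambda>_. rademacher))"
    by (intro borel_measurable_prod measurable_compose[OF measurable_component_singleton]) auto
  have g_restrict: "?g (restrict h J) = ?g h" for h
    by (intro prod.cong refl) simp
  have factor: "integrable rademacher (f j)" for j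
    by (rule integrable_measure_pmf_finite) simp
  have "integrable (distr Qenv (PiM J (\<lambda>_. rademacher)) (\<lambda>x. restrict x J)) ?g"
    unfolding distr by (rule P.product_integrable_prod[OF J factor])
  then show "integrable Qenv ?g"
    using integrable_distr_eq[OF restrict g] by (simp add: g_restrict)
  have "(\<integral>h. ?g h \<partial>Qenv) = (\<integral>x. ?g x \<partial>distr Qenv (PiM J (\<lambda>_. rademacher)) (\<lambda>x. restrict x J))"
    by (simp add: integral_distr[OF restrict g] g_restrict)
  also have "\<dots> = (\<Prod>j\<in>J. \<integral>y. f j y \<partial>rademacher)"
    unfolding distr by (rule P.product_integral_prod[OF J factor])
  finally show "(\<integral>h. ?g h \<partial>Qenv) = (\<Prod>j\<in>J. \<integral>y. f j y \<partial>rademacher)" .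
qed

lemma integral_Qenv_path_powers:
  fixes I :: "nat set" and a b :: "nat \<Rightarrow> int" and c :: real and i j :: nat
  defines "F \<equiv> \<lambda>h. \<Prod>n\<in>I. (1 + c * h (n, a n)) ^ i * (1 + c * h (n, b n)) ^ j"
    and "M \<equiv> \<lambda>k. ((1 + c) ^ k + (1 - c) ^ k) / 2"
  assumes I: "finite I"
  shows "integrable Qenv F"
    and "(\<integral>h. F h \<partial>Qenv) = (\<Prod>n\<in>I. if a n = b n then M (i + j) else M i * M j)"
proof -
  (* Regroup the product along the two paths as a product over the finitely many coordinates
     (n, x) they visit, the coordinate (n, x) carrying the exponent k (n, x). *)
  define X where "X = a ` I \<union> b ` I"
  define k where "k = (\<lambda>(n, x). (if a n = x then i else 0) + (if b n = x then j else 0))"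
  define f where "f = (\<lambda>nx (y::real). (1 + c * y) ^ k nx)"
  have X: "finite X" "a n \<in> X" "b n \<in> X" if "n \<in> I" for n
    using I that unfolding X_def by auto
  have site: "(\<Prod>x\<in>X. (g x :: real) ^ k (n, x)) = g (a n) ^ i * g (b n) ^ j" if "n \<in> I" for g n
  proof -
    have "(\<Prod>x\<in>X. g x ^ k (n, x))
        = (\<Prod>x\<in>X. (if x = a n then g x ^ i else 1) * (if x = b n then g x ^ j else 1))"
      unfolding k_def by (intro prod.cong refl) (auto simp: power_add)
    also have "\<dots> = (\<Prod>x\<in>X. if x = a n then g x ^ i else 1) * (\<Prod>x\<in>X. if x = b n then g x ^ j else 1)"
      by (rule prod.distrib)
    finally show ?thesis using X[OF that] by (simp add: prod.delta)
  qed
  have F: "F h = (\<Prod>nx\<in>I \<times> X. f nx (h nx))" for h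
  proof -
    have "(\<Prod>nx\<in>I \<times> X. f nx (h nx)) = (\<Prod>n\<in>I. \<Prod>x\<in>X. (1 + c * h (n, x)) ^ k (n, x))"
      unfolding f_def by (subst prod.cartesian_product) (simp add: split_def)
    also have "\<dots> = F h"
      unfolding F_def using site[of _ "\<lambda>x. 1 + c * h (_, x)"] by (intro prod.cong refl) simp
    finally show ?thesis ..
  qed
  show "integrable Qenv F"
    unfolding F using I X by (intro integral_Qenv_prod) auto
  have moment: "(\<integral>y. f nx y \<partial>rademacher) = M (k nx)" for nx
    unfolding f_def M_def by (simp add: integral_pmf_of_set)
  have "(\<integral>h. F h \<partial>Qenv) = (\<Prod>nx\<in>I \<times> X. M (k nx))"
    unfolding F moment[symmetric] using I X by (intro integral_Qenv_prod) auto
  also have "\<dots> = (\<Prod>n\<in>I. \<Prod>x\<in>X. M (k (n, x)))"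
    by (subst prod.cartesian_product) (simp add: split_def)
  also have "\<dots> = (\<Prod>n\<in>I. \<Prod>x\<in>{a n, b n}. M (k (n, x)))"
    using X by (intro prod.cong refl prod.mono_neutral_right) (auto simp: k_def M_def)
  also have "\<dots> = (\<Prod>n\<in>I. if a n = b n then M (i + j) else M i * M j)"
    by (intro prod.cong refl) (auto simp: k_def)
  finally show "(\<integral>h. F h \<partial>Qenv) = (\<Prod>n\<in>I. if a n = b n then M (i + j) else M i * M j)" .
qed

definition env_prod :: "real \<Rightarrow> nat \<Rightarrow> (nat \<Rightarrow> int) \<Rightarrow> (nat \<times> int \<Rightarrow> real) \<Rightarrow> real" where
  "env_prod c N w h = (\<Prod>n\<in>{1..N}. 1 + c * h (n, w n))"

lemma env_prod_covariance:
  shows "integrable Qenv (\<lambda>h. (env_prod c N w h - 1) * (env_prod c N v h - 1))"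
    and "(\<integral>h. (env_prod c N w h - 1) * (env_prod c N v h - 1) \<partial>Qenv) = overlap_weight (c ^ 2) N w v - 1"
proof -
  interpret prob_space Qenv
    unfolding Qenv_def by (intro prob_space_PiM prob_space_measure_pmf)
  note powers =
    integral_Qenv_path_powers[where I = "{1..N}" and a = w and b = v and c = c, OF finite_atLeastAtMost]
  have pair: "(\<lambda>h. env_prod c N w h * env_prod c N v h)
      = (\<lambda>h. \<Prod>n\<in>{1..N}. (1 + c * h (n, w n)) ^ 1 * (1 + c * h (n, v n)) ^ 1)"
    unfolding env_prod_def by (simp add: prod.distrib)
  have single: "env_prod c N w = (\<lambda>h. \<Prod>n\<in>{1..N}. (1 + c * h (n, w n)) ^ 1 * (1 + c * h (n, v n)) ^ 0)"
    "env_prod c N v = (\<lambda>h. \<Prod>n\<in>{1..N}. (1 + c * h (n, w n)) ^ 0 * (1 + c * h (n, v n)) ^ 1)"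
    unfolding env_prod_def by simp_all
  have int: "integrable Qenv (\<lambda>h. env_prod c N w h * env_prod c N v h)"
    unfolding pair by (rule powers(1))
  have int': "integrable Qenv (env_prod c N w)" "integrable Qenv (env_prod c N v)"
    unfolding single by (rule powers(1))+
  have "(\<integral>h. env_prod c N w h * env_prod c N v h \<partial>Qenv) = overlap_weight (c ^ 2) N w v"
    unfolding pair powers(2) overlap_weight_def
    by (intro prod.cong refl) (simp add: power2_eq_square algebra_simps)
  moreover have "(\<integral>h. env_prod c N w h \<partial>Qenv) = 1" "(\<integral>h. env_prod c N v h \<partial>Qenv) = 1"
    unfolding single powers(2) by (simp_all cong: if_cong)
  moreover have "(\<lambda>h. (env_prod c N w h - 1) * (env_prod c N v h - 1))
      = (\<lambda>h. env_prod c N w h * env_prod c N v h - env_prod c N w h - env_prod c N v h + 1)"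
    by (simp add: fun_eq_iff algebra_simps)
  ultimately show "integrable Qenv (\<lambda>h. (env_prod c N w h - 1) * (env_prod c N v h - 1))"
    and "(\<integral>h. (env_prod c N w h - 1) * (env_prod c N v h - 1) \<partial>Qenv) = overlap_weight (c ^ 2) N w v - 1"
    using int int' by (simp_all add: prob_space)
qed

lemma overlap_avg_minus_one_le:
  assumes e: "e \<ge> 0"
  shows "overlap_avg e N b - 1 \<le> (\<Sum>k\<in>{1..N}. (2 * e * sqrt (real N)) ^ k)"
proof -
  define q where "q t = 1 / sqrt (real t)" for t :: nat
  have q: "q t \<ge> 0" for t unfolding q_def by simp
  have "overlap_avg e N b \<le> (\<Sum>k\<le>N. (e * (\<Sum>t\<in>{1..N}. q t)) ^ k)"
    using e q hit_prob_le_inverse_sqrt unfolding q_def by (rule overlap_avg_le)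
  also have "\<dots> = 1 + (\<Sum>k\<in>{1..N}. (e * (\<Sum>t\<in>{1..N}. q t)) ^ k)"
    by (simp add: atMost_atLeast0 sum.atLeast_Suc_atMost del: sum.cl_ivl_Suc)
  also have "\<dots> \<le> 1 + (\<Sum>k\<in>{1..N}. (2 * e * sqrt (real N)) ^ k)"
  proof (intro add_left_mono sum_mono power_mono)
    show "e * (\<Sum>t\<in>{1..N}. q t) \<le> 2 * e * sqrt (real N)" for k
      using mult_left_mono[OF sum_inverse_sqrt_le e] unfolding q_def by (simp add: mult_ac)
    show "0 \<le> e * (\<Sum>t\<in>{1..N}. q t)" for k
      using e q by (simp add: sum_nonneg)
  qed
  finally show ?thesis by simp
qed

section \<open>The second moment of K\<close>

lemma sum_quadratic_form_le:
  fixes x :: "'a \<Rightarrow> real"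
  assumes sym: "\<And>u v. M u v = M v u" and nonneg: "\<And>u v. M u v \<ge> 0"
  shows "(\<Sum>u\<in>S. \<Sum>v\<in>S. x u * x v * M u v) \<le> (\<Sum>u\<in>S. x u ^ 2 * (\<Sum>v\<in>S. M u v))"
proof -
  have swap: "(\<Sum>u\<in>S. \<Sum>v\<in>S. x v ^ 2 * M u v) = (\<Sum>u\<in>S. \<Sum>v\<in>S. x u ^ 2 * M u v)"
    by (subst sum.swap) (simp only: sym)
  have "(\<Sum>u\<in>S. \<Sum>v\<in>S. x u * x v * M u v) \<le> (\<Sum>u\<in>S. \<Sum>v\<in>S. (x u ^ 2 + x v ^ 2) / 2 * M u v)"
  proof (intro sum_mono mult_right_mono)
    show "x u * x v \<le> (x u ^ 2 + x v ^ 2) / 2" for u v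
      using sum_squares_bound[of "x u" "x v"] by simp
  qed (rule nonneg)
  also have "\<dots> = ((\<Sum>u\<in>S. \<Sum>v\<in>S. x u ^ 2 * M u v) + (\<Sum>u\<in>S. \<Sum>v\<in>S. x v ^ 2 * M u v)) / 2"
    by (simp add: sum.distrib add_divide_distrib distrib_right sum_divide_distrib)
  also have "\<dots> = (\<Sum>u\<in>S. \<Sum>v\<in>S. x u ^ 2 * M u v)"
    unfolding swap by simp
  also have "\<dots> = (\<Sum>u\<in>S. x u ^ 2 * (\<Sum>v\<in>S. M u v))"
    by (simp add: sum_distrib_left)
  finally show ?thesis .
qed

lemma K_minus_N_eq:
  "K c N h - real N = (\<Sum>w\<in>walks N. real_of_int (w N) ^ 2 / 2 ^ N * (env_prod (c N) N w h - 1))"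
proof -
  have "K c N h = (\<Sum>w\<in>walks N. real_of_int (w N) ^ 2 / 2 ^ N * env_prod (c N) N w h)"
    unfolding K_def integral_PN_eq_walk_avg walk_avg_def env_prod_def by (simp add: sum_divide_distrib mult.commute)
  moreover have "real N = (\<Sum>w\<in>walks N. real_of_int (w N) ^ 2 / 2 ^ N)"
    using walk_second_moment[of N] unfolding walk_avg_def by (simp add: sum_divide_distrib)
  ultimately show ?thesis by (simp add: sum_subtractf right_diff_distrib)
qed

lemma integral_K_minus_N_sq:
  fixes c :: "nat \<Rightarrow> real" and N :: nat
  defines "\<beta> \<equiv> \<lambda>w :: nat \<Rightarrow> int. real_of_int (w N) ^ 2 / 2 ^ N"
  shows "(\<integral>h. (K c N h - real N) ^ 2 \<partial>Qenv)
    = (\<Sum>w\<in>walks N. \<Sum>v\<in>walks N. \<beta> w * \<beta> v * (overlap_weight ((c N) ^ 2) N w v - 1))"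
proof -
  let ?A = "\<lambda>w h. env_prod (c N) N w h - 1"
  have "(K c N h - real N) ^ 2 = (\<Sum>w\<in>walks N. \<Sum>v\<in>walks N. \<beta> w * \<beta> v * (?A w h * ?A v h))" for h
    unfolding K_minus_N_eq \<beta>_def power2_eq_square sum_product by (intro sum.cong refl) (simp add: mult_ac)
  then have "(\<integral>h. (K c N h - real N) ^ 2 \<partial>Qenv)
      = (\<Sum>w\<in>walks N. \<Sum>v\<in>walks N. \<integral>h. \<beta> w * \<beta> v * (?A w h * ?A v h) \<partial>Qenv)"
    by (simp add: env_prod_covariance(1))
  also have "\<dots> = (\<Sum>w\<in>walks N. \<Sum>v\<in>walks N. \<beta> w * \<beta> v * (overlap_weight ((c N) ^ 2) N w v - 1))"
    by (simp add: env_prod_covariance(2))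
  finally show ?thesis .
qed

lemma K_second_moment_le:
  "(\<integral>h. (K c N h - real N) ^ 2 \<partial>Qenv)
    \<le> real N ^ 2 * (3 * (\<Sum>k\<in>{1..N}. (2 * (c N) ^ 2 * sqrt (real N)) ^ k))"
proof -
  define e where "e = (c N) ^ 2"
  define S where "S = (\<Sum>k\<in>{1..N}. (2 * e * sqrt (real N)) ^ k)"
  have e: "e \<ge> 0" unfolding e_def by simp
  have S: "S \<ge> 0" unfolding S_def using e by (simp add: sum_nonneg)
  have "(\<integral>h. (K c N h - real N) ^ 2 \<partial>Qenv)
      \<le> (\<Sum>w\<in>walks N. (real_of_int (w N) ^ 2 / 2 ^ N) ^ 2 * (\<Sum>v\<in>walks N. overlap_weight e N w v - 1))"
    unfolding integral_K_minus_N_sq e_def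
    by (rule sum_quadratic_form_le) (simp_all add: overlap_weight_commute overlap_weight_ge_1)
  also have "\<dots> = (\<Sum>w\<in>walks N. real_of_int (w N) ^ 4 * (overlap_avg e N w - 1) / 2 ^ N)"
  proof (intro sum.cong refl)
    fix w
    have "(\<Sum>v\<in>walks N. overlap_weight e N w v - 1) = 2 ^ N * (overlap_avg e N w - 1)"
      unfolding overlap_avg_def walk_avg_def by (simp add: sum_subtractf card_walks algebra_simps)
    then show "(real_of_int (w N) ^ 2 / 2 ^ N) ^ 2 * (\<Sum>v\<in>walks N. overlap_weight e N w v - 1)
        = real_of_int (w N) ^ 4 * (overlap_avg e N w - 1) / 2 ^ N"
      by (simp add: power2_eq_square power4_eq_xxxx)
  qed
  also have "\<dots> = walk_avg N (\<lambda>w. real_of_int (w N) ^ 4 * (overlap_avg e N w - 1))"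
    unfolding walk_avg_def by (simp add: sum_divide_distrib)
  also have "\<dots> \<le> walk_avg N (\<lambda>w. real_of_int (w N) ^ 4 * S)"
    unfolding S_def using overlap_avg_minus_one_le[OF e]
    by (intro walk_avg_mono mult_left_mono) auto
  also have "\<dots> \<le> real N ^ 2 * (3 * S)"
    unfolding walk_avg_multc walk_fourth_moment
    using mult_right_mono[OF _ S, of "3 * real N ^ 2 - 2 * real N" "3 * real N ^ 2"] by (simp add: mult_ac)
  finally show ?thesis unfolding S_def e_def .
qed

theorem lemma13:
  shows "\<exists>c1::real. \<forall>c::nat \<Rightarrow> real.
           (\<forall>N. c N > 0) \<longrightarrow> ((\<lambda>N. (c N)^2 * sqrt (real N)) \<longlonglongrightarrow> 0) \<longrightarrow>
           (\<forall>N\<ge>1. (\<integral>h. (K c N h - real N)^2 \<partial>Qenv)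
                  \<le> (real N)^2 * (\<Sum>n=1..N. (c1 * (c N)^2 * sqrt (real N))^n))"
proof (intro exI allI impI)
  fix c :: "nat \<Rightarrow> real" and N :: nat
  define y where "y = 2 * (c N) ^ 2 * sqrt (real N)"
  have geometric: "3 * (\<Sum>k\<in>{1..N}. y ^ k) \<le> (\<Sum>k\<in>{1..N}. (3 * y) ^ k)"
    unfolding sum_distrib_left power_mult_distrib y_def
    using power_increasing[of 1 _ "3::real"] by (intro sum_mono mult_right_mono) auto
  have "(\<integral>h. (K c N h - real N) ^ 2 \<partial>Qenv) \<le> real N ^ 2 * (3 * (\<Sum>k\<in>{1..N}. y ^ k))"
    unfolding y_def by (rule K_second_moment_le)
  also have "\<dots> \<le> real N ^ 2 * (\<Sum>k\<in>{1..N}. (3 * y) ^ k)"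
    using geometric by (rule mult_left_mono) simp
  also have "3 * y = 6 * (c N) ^ 2 * sqrt (real N)"
    unfolding y_def by simp
  finally show "(\<integral>h. (K c N h - real N)^2 \<partial>Qenv)
      \<le> (real N)^2 * (\<Sum>n=1..N. (6 * (c N)^2 * sqrt (real N))^n)" .
qed

end
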